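(* Let $E$ be an elliptic curve over $\mathbb{Q}$ in short Weierstrass form $y^2=x^3+Ax+B$ with $A,B\in\mathbb{Q}$. Suppose $E(\mathbb{R})$ has two connected components, and let $E^B(\mathbb{R})$ denote the bounded one. Then every rational point $Q\in E(\mathbb{Q})\cap E^B(\mathbb{R})$ satisfies $$\log|x(Q)|\le 4h(E).$$
   Context: For a rational number $a/b$ in lowest terms, $h(a/b)=\log\max\{|a|,|b|\}$. Let $\Delta=-16(4A^3+27B^2)$ be the discriminant of $E$ and $j=-1728(4A)^3/\Delta$ its $j$-invariant. The height of $E$ is $h(E)=\frac{1}{12}\max\{h(j),h(\Delta)\}$. *)

theory Defs
  imports "HOL-Analysis.Analysis"
begin

definition rat_height :: "rat \<Rightarrow> real" where
  "rat_height q = (case quotient_of q of (a, b) \<Rightarrow> ln (real_of_int (max \<bar>a\<bar> \<bar>b\<bar>)))"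

definition ec_disc :: "rat \<Rightarrow> rat \<Rightarrow> rat" where
  "ec_disc A B = -16 * (4 * A ^ 3 + 27 * B ^ 2)"

definition ec_j :: "rat \<Rightarrow> rat \<Rightarrow> rat" where
  "ec_j A B = -1728 * (4 * A) ^ 3 / ec_disc A B"

definition ec_height :: "rat \<Rightarrow> rat \<Rightarrow> real" where
  "ec_height A B = (1 / 12) * max (rat_height (ec_j A B)) (rat_height (ec_disc A B))"

definition ec_real_points :: "rat \<Rightarrow> rat \<Rightarrow> (real \<times> real) set" where
  "ec_real_points A B = {(x, y). y ^ 2 = x ^ 3 + of_rat A * x + of_rat B}"

end

theory Submission
  imports Defs
begin

text \<open>
  Write \<open>f t = t\<^sup>3 + A t + B\<close>. If \<open>3 x\<^sup>2 + 4A \<ge> 0\<close> then \<open>f\<close> is increasing on \<open>[x, \<infinity>)\<close>,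
  so one of the branches \<open>t \<mapsto> (t, \<plusminus>\<surd>f t)\<close>, \<open>t \<ge> x\<close>, is an unbounded connected set
  through \<open>(x, y)\<close>; hence a point on the bounded component has \<open>x\<^sup>2 < 4|A|/3\<close>.
  On the other hand \<open>j \<Delta> = -110592 A\<^sup>3\<close>, and both \<open>|j|\<close> and \<open>|\<Delta>|\<close> are at most
  \<open>exp (12 h(E))\<close>, so \<open>|x|\<^sup>6 \<le> (64/27) |A|\<^sup>3 \<le> exp (24 h(E))\<close>.
\<close>

lemma rat_height_nonneg: "rat_height q \<ge> 0"
proof -
  obtain a b where q: "quotient_of q = (a, b)" by (cases "quotient_of q")
  have "b > 0" using quotient_of_denom_pos[OF q] .
  then show ?thesis by (simp add: rat_height_def q)
qed

lemma abs_of_rat_le_exp_rat_height: "\<bar>of_rat q :: real\<bar> \<le> exp (rat_height q)"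
proof -
  obtain a b where q: "quotient_of q = (a, b)" by (cases "quotient_of q")
  have b: "b > 0" using quotient_of_denom_pos[OF q] .
  have "\<bar>of_rat q :: real\<bar> = \<bar>of_int a\<bar> / of_int b"
    using b by (simp add: quotient_of_div[OF q] of_rat_divide abs_divide)
  also have "\<dots> \<le> \<bar>of_int a\<bar>"
    using b by (simp add: divide_le_eq mult_le_cancel_left1)
  also have "\<dots> \<le> of_int (max \<bar>a\<bar> \<bar>b\<bar>)" by simp
  also have "\<dots> = exp (rat_height q)"
    using b by (simp add: rat_height_def q)
  finally show ?thesis .
qed

lemma cubic_mono_right:
  fixes a b x t :: real
  assumes "0 \<le> 3 * x\<^sup>2 + 4 * a" and "x \<le> t"
  shows "x ^ 3 + a * x + b \<le> t ^ 3 + a * t + b"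
proof -
  have "t ^ 3 + a * t + b - (x ^ 3 + a * x + b) = (t - x) * ((t + x / 2)\<^sup>2 + (3 * x\<^sup>2 + 4 * a) / 4)"
    by (simp add: power2_eq_square power3_eq_cube field_simps)
  moreover have "0 \<le> (t - x) * ((t + x / 2)\<^sup>2 + (3 * x\<^sup>2 + 4 * a) / 4)"
    using assms by simp
  ultimately show ?thesis by linarith
qed

lemma connected_component_unbounded_of_nonneg_right:
  fixes f :: "real \<Rightarrow> real"
  assumes cont: "continuous_on {x..} f"
    and nonneg: "\<And>t. x \<le> t \<Longrightarrow> 0 \<le> f t"
    and on_graph: "y\<^sup>2 = f x"
  shows "\<not> bounded (connected_component_set {(u, v). v\<^sup>2 = f u} (x, y))"
proof
  assume bdd: "bounded (connected_component_set {(u, v). v\<^sup>2 = f u} (x, y))"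
  define s :: real where "s = (if 0 \<le> y then 1 else -1)"
  define g where "g t = (t, s * sqrt (f t))" for t
  have "(x, y) \<in> g ` {x..}"
  proof -
    have "g x = (x, y)"
      using on_graph[symmetric] by (auto simp: g_def s_def real_sqrt_abs)
    then show ?thesis by force
  qed
  moreover have "continuous_on {x..} g"
    unfolding g_def by (intro continuous_intros cont)
  then have "connected (g ` {x..})"
    by (rule connected_continuous_image) simp
  moreover have "g ` {x..} \<subseteq> {(u, v). v\<^sup>2 = f u}"
    using nonneg by (auto simp: g_def s_def power_mult_distrib)
  ultimately have "g ` {x..} \<subseteq> connected_component_set {(u, v). v\<^sup>2 = f u} (x, y)"
    by (rule connected_component_maximal)
  with bdd have "bounded (g ` {x..})" by (rule bounded_subset)
  then obtain K where K: "\<And>t. x \<le> t \<Longrightarrow> norm (g t) \<le> K"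
    unfolding bounded_iff by auto
  have "max x (K + 1) \<le> norm (g (max x (K + 1)))"
    unfolding g_def by (metis norm_fst_le fst_conv real_norm_def abs_ge_self order_trans)
  with K[of "max x (K + 1)"] show False by simp
qed

lemma bounded_component_cubic_abscissa:
  fixes a b x y :: real
  assumes "y\<^sup>2 = x ^ 3 + a * x + b"
    and "bounded (connected_component_set {(u, v). v\<^sup>2 = u ^ 3 + a * u + b} (x, y))"
  shows "3 * x\<^sup>2 < - 4 * a"
proof (rule ccontr)
  assume "\<not> 3 * x\<^sup>2 < - 4 * a"
  then have "\<And>t. x \<le> t \<Longrightarrow> 0 \<le> t ^ 3 + a * t + b"
    using cubic_mono_right[of x a _ b] assms(1) by (smt (verit) zero_le_power2)
  then have "\<not> bounded (connected_component_set {(u, v). v\<^sup>2 = u ^ 3 + a * u + b} (x, y))"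
    using assms(1) by (intro connected_component_unbounded_of_nonneg_right continuous_intros)
  with assms(2) show False by contradiction
qed

lemma ec_j_mult_disc: "ec_disc A B \<noteq> 0 \<Longrightarrow> ec_j A B * ec_disc A B = -110592 * A ^ 3"
  by (simp add: ec_j_def power_mult_distrib)

lemma ec_coeff_cube_le_exp_height:
  assumes "ec_disc A B \<noteq> 0"
  shows "110592 * \<bar>of_rat A :: real\<bar> ^ 3 \<le> exp (24 * ec_height A B)"
proof -
  have exp12: "exp (12 * ec_height A B) = max (exp (rat_height (ec_j A B))) (exp (rat_height (ec_disc A B)))"
    by (simp add: ec_height_def max_def)
  have "110592 * \<bar>of_rat A :: real\<bar> ^ 3 = \<bar>of_rat (ec_j A B * ec_disc A B)\<bar>"
    by (simp add: ec_j_mult_disc[OF assms] of_rat_mult of_rat_power power_abs abs_mult)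
  also have "\<dots> = \<bar>of_rat (ec_j A B) :: real\<bar> * \<bar>of_rat (ec_disc A B)\<bar>"
    by (simp add: of_rat_mult abs_mult)
  also have "\<dots> \<le> exp (12 * ec_height A B) * exp (12 * ec_height A B)"
    unfolding exp12
    by (intro mult_mono abs_of_rat_le_exp_rat_height[THEN order_trans]) (auto simp: le_max_iff_disj)
  also have "\<dots> = exp (24 * ec_height A B)"
    by (simp flip: exp_add)
  finally show ?thesis .
qed

theorem proposition2p2:
  fixes A B x y :: rat
  assumes elliptic: "ec_disc A B \<noteq> 0"
    and two_components: "card (components (ec_real_points A B)) = 2"
    and on_curve: "y ^ 2 = x ^ 3 + A * x + B"
    and bounded_comp:
      "bounded (connected_component_set (ec_real_points A B) (of_rat x, of_rat y))"
  shows "ln \<bar>of_rat x :: real\<bar> \<le> 4 * ec_height A B"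
proof -
  let ?x = "of_rat x :: real" and ?a = "of_rat A :: real"
  have "(of_rat y)\<^sup>2 = ?x ^ 3 + ?a * ?x + of_rat B"
    by (metis on_curve of_rat_add of_rat_mult of_rat_power)
  then have "3 * ?x\<^sup>2 < - 4 * ?a"
    using bounded_comp unfolding ec_real_points_def by (rule bounded_component_cubic_abscissa)
  then have "(?x\<^sup>2) ^ 3 \<le> (4 * \<bar>?a\<bar> / 3) ^ 3"
    by (intro power_mono) (auto simp del: abs_of_rat)
  then have "\<bar>?x\<bar> ^ 6 \<le> (4 * \<bar>?a\<bar> / 3) ^ 3"
    by (simp add: power_even_abs_numeral del: abs_of_rat flip: power_mult)
  also have "\<dots> \<le> 110592 * \<bar>?a\<bar> ^ 3"
    by (simp add: power_divide power_mult_distrib)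
  also have "\<dots> \<le> exp (4 * ec_height A B) ^ 6"
    using ec_coeff_cube_le_exp_height[OF elliptic] by (simp flip: exp_of_nat_mult)
  finally have "\<bar>?x\<bar> \<le> exp (4 * ec_height A B)"
    by (subst (asm) power_mono_iff) auto
  moreover have "0 \<le> ec_height A B"
    by (simp add: ec_height_def rat_height_nonneg le_max_iff_disj)
  ultimately show ?thesis
    by (cases "?x = 0") (auto dest: ln_mono)
qed

end
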